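(* Let $P,Q$ be nonzero coprime integers with $\Delta:=P^2-4Q\neq0$, such that $\alpha/\beta$ is not a root of unity, where $\alpha,\beta$ are the roots of $x^2-Px+Q$. Let $(U_n)$ be the Lucas sequence $U_n=(\alpha^n-\beta^n)/(\alpha-\beta)$. Then for all positive integers $n,k$ with $n\ge k$, \[\mathrm{lcm}(U_n,U_{n-1},\dots,U_{n-k+1})=\mathrm{lcm}\left\{U_m\binom{n}{m}_{\boldsymbol U}:\ 1\le m\le k\right\}.\]
   Context: $U_0=0$, $U_1=1$, $U_{n+2}=PU_{n+1}-QU_n$. For $j\ge0$, $[j]_{\boldsymbol U}!:=U_1\cdots U_j$ ($[0]_{\boldsymbol U}!=1$), and for $n\ge k\ge 1$, $\binom{n}{k}_{\boldsymbol U}:=\frac{U_nU_{n-1}\cdots U_{n-k+1}}{U_1U_2\cdots U_k}=\frac{[n]_{\boldsymbol U}!}{[k]_{\boldsymbol U}![n-k]_{\boldsymbol U}!}$ (these are integers when $\gcd(P,Q)=1$). *)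

theory Defs
  imports "HOL-Analysis.Analysis"
begin

fun lucasU :: "int \<Rightarrow> int \<Rightarrow> nat \<Rightarrow> int" where
  "lucasU P Q 0 = 0"
| "lucasU P Q (Suc 0) = 1"
| "lucasU P Q (Suc (Suc n)) = P * lucasU P Q (Suc n) - Q * lucasU P Q n"

definition lucas_fact :: "int \<Rightarrow> int \<Rightarrow> nat \<Rightarrow> int" where
  "lucas_fact P Q j = (\<Prod>i=1..j. lucasU P Q i)"

text \<open>U-binomial coefficient (U_n ... U_(n-k+1)) / (U_1 ... U_k); an integer when gcd(P,Q)=1,
  so the exact quotient is taken with integer division.\<close>
definition lucas_binom :: "int \<Rightarrow> int \<Rightarrow> nat \<Rightarrow> nat \<Rightarrow> int" where
  "lucas_binom P Q n k = (\<Prod>i=n-k+1..n. lucasU P Q i) div lucas_fact P Q k"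

definition lucas_alpha :: "int \<Rightarrow> int \<Rightarrow> complex" where
  "lucas_alpha P Q = (of_int P + csqrt (of_int (P^2 - 4*Q))) / 2"
definition lucas_beta :: "int \<Rightarrow> int \<Rightarrow> complex" where
  "lucas_beta P Q = (of_int P - csqrt (of_int (P^2 - 4*Q))) / 2"

definition root_of_unity :: "complex \<Rightarrow> bool" where
  "root_of_unity z \<longleftrightarrow> (\<exists>m::nat. m > 0 \<and> z ^ m = 1)"

end

theory Submission
  imports Defs
begin

(* For every integer q the indices i with q dvd U_i form the multiples of a single d, the rank of
   apparition of q: the set contains 0 and is closed under addition and, as P and Q are coprime,
   under subtraction.  The identity U_m [n,m]_U = U_(n-m+1) [n,m-1]_U shows that each U_i of the
   window n-k+1..n divides one of the numbers A_m = U_m [n,m]_U.  Conversely,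
   v_p(A_m) = v_p(U_m) + sum of v_p(U_i) over the window n-m+1..n - sum of v_p(U_i) for i <= m,
   and splitting every valuation into the layers t with p^t dvd U_i, layer t contributes
   [d dvd m] + #(multiples of d in a window of m consecutive integers) - floor(m/d) for the rank d
   of p^t.  This is at most 1, and at most 0 unless the window contains a multiple of d; so
   v_p(A_m) is bounded by the largest v_p(U_i) in the window. *)

lemma nat_set_eq_multiples:
  fixes S :: "nat set"
  assumes "0 \<in> S"
    and add: "\<And>a b. a \<in> S \<Longrightarrow> b \<in> S \<Longrightarrow> a + b \<in> S"
    and diff: "\<And>a b. a + b \<in> S \<Longrightarrow> b \<in> S \<Longrightarrow> a \<in> S"
  shows "\<exists>d. S = {i. d dvd i}"
proof (cases "S \<subseteq> {0}")
  case True
  then have "S = {i. 0 dvd i}" using \<open>0 \<in> S\<close> by auto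
  then show ?thesis ..
next
  case False
  then have ex: "\<exists>i. 0 < i \<and> i \<in> S" by auto
  define d where "d = (LEAST i. 0 < i \<and> i \<in> S)"
  have d: "0 < d" "d \<in> S"
    using LeastI_ex[OF ex] unfolding d_def by auto
  have d_least: "d \<le> i" if "0 < i" "i \<in> S" for i
    unfolding d_def using that by (simp add: Least_le)
  have multiple: "d * j \<in> S" for j
    by (induction j) (simp_all add: \<open>0 \<in> S\<close> add d(2))
  have "i \<in> S \<longleftrightarrow> d dvd i" for i
  proof
    assume "i \<in> S"
    then have "i mod d + d * (i div d) \<in> S" by simp
    then have "i mod d \<in> S" using diff multiple by blast
    moreover have "i mod d < d" using d(1) by simp
    ultimately have "i mod d = 0" using d_least by (meson leD neq0_conv)
    then show "d dvd i" by (simp add: dvd_eq_mod_eq_0)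
  next
    assume "d dvd i"
    then show "i \<in> S" using multiple by (auto simp: dvd_def)
  qed
  then show ?thesis by blast
qed

lemma card_multiples_interval:
  fixes a c d :: nat
  shows "card {i \<in> {a+1..a+c}. d dvd i} = (a + c) div d - a div d"
proof (induction c)
  case 0
  then show ?case by simp
next
  case (Suc c)
  have "{i \<in> {a+1..a+Suc c}. d dvd i} =
      (if d dvd Suc (a + c) then insert (Suc (a + c)) else id) {i \<in> {a+1..a+c}. d dvd i}"
    by (auto simp: le_Suc_eq)
  moreover have "a div d \<le> (a + c) div d" by (simp add: div_le_mono)
  ultimately show ?case
    using Suc by (auto simp: div_Suc dvd_eq_mod_eq_0)
qed

lemma card_multiples_window_le:
  fixes a d m :: nat
  assumes "1 \<le> m"
  shows "of_bool (d dvd m) + card {i \<in> {a+1..a+m}. d dvd i}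
      \<le> of_bool (\<exists>i \<in> {a+1..a+m}. d dvd i) + card {i \<in> {1..m}. d dvd i}"
proof -
  have window: "card {i \<in> {a+1..a+m}. d dvd i} = (a + m) div d - a div d"
    by (rule card_multiples_interval)
  have initial: "card {i \<in> {1..m}. d dvd i} = m div d"
    using card_multiples_interval[of 0 m d] by simp
  have split: "(a + m) div d = a div d + m div d + (a mod d + m mod d) div d"
    by (rule div_add1_eq)
  show ?thesis
  proof (cases "d dvd m")
    case True
    with assms have "0 < m div d" by (auto simp: dvd_def)
    moreover have "card {i \<in> {a+1..a+m}. d dvd i} = m div d"
      using True window split by simp
    ultimately have "\<exists>i \<in> {a+1..a+m}. d dvd i"
      by (metis (no_types, lifting) card.empty empty_Collect_eq less_nat_zero_code)
    then show ?thesis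
      using True \<open>card {i \<in> {a+1..a+m}. d dvd i} = m div d\<close> initial by simp
  next
    case False
    show ?thesis
    proof (cases "\<exists>i \<in> {a+1..a+m}. d dvd i")
      case True
      have "(a mod d + m mod d) div d < 2"
      proof (cases "d = 0")
        case False
        then have "a mod d + m mod d < 2 * d"
          using mod_less_divisor[of d a] mod_less_divisor[of d m] by linarith
        then show ?thesis by (rule less_mult_imp_div_less)
      qed simp
      then show ?thesis using True False window initial split by simp
    next
      case False
      then have "{i \<in> {a+1..a+m}. d dvd i} = {}" by auto
      then show ?thesis using \<open>\<not> d dvd m\<close> by (simp only:) simp
    qed
  qed
qed

lemma multiplicity_eq_sum_power_dvd:
  fixes p x :: "'a :: factorial_semiring"
  assumes "prime p" "x \<noteq> 0" "multiplicity p x \<le> B"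
  shows "multiplicity p x = (\<Sum>t = 1..B. of_bool (p ^ t dvd x))"
proof -
  have "{t \<in> {1..B}. p ^ t dvd x} = {1..multiplicity p x}"
    using assms by (auto simp: power_dvd_iff_le_multiplicity)
  then show ?thesis by (simp add: Int_def conj_commute)
qed

lemma sum_multiplicity_eq_sum_card_power_dvd:
  fixes g :: "'b \<Rightarrow> 'a :: factorial_semiring"
  assumes "prime p" "finite J" "\<And>i. i \<in> J \<Longrightarrow> g i \<noteq> 0"
    and "\<And>i. i \<in> J \<Longrightarrow> multiplicity p (g i) \<le> B"
  shows "(\<Sum>i \<in> J. multiplicity p (g i)) = (\<Sum>t = 1..B. card {i \<in> J. p ^ t dvd g i})"
proof -
  have "(\<Sum>i \<in> J. multiplicity p (g i)) = (\<Sum>i \<in> J. \<Sum>t = 1..B. of_bool (p ^ t dvd g i))"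
    using assms by (intro sum.cong multiplicity_eq_sum_power_dvd) auto
  also have "\<dots> = (\<Sum>t = 1..B. card {i \<in> J. p ^ t dvd g i})"
    using \<open>finite J\<close> by (subst sum.swap) (simp add: Int_def conj_commute)
  finally show ?thesis .
qed

lemma multiplicity_add_sum_le_by_layers:
  fixes g :: "'b \<Rightarrow> 'a :: factorial_semiring"
  assumes "prime p" "finite J" "finite K" "x \<noteq> 0" "y \<noteq> 0" "\<And>i. i \<in> J \<union> K \<Longrightarrow> g i \<noteq> 0"
    and layer_le: "\<And>t. of_bool (p ^ t dvd x) + card {i \<in> J. p ^ t dvd g i}
      \<le> of_bool (p ^ t dvd y) + card {i \<in> K. p ^ t dvd g i}"
  shows "multiplicity p x + (\<Sum>i \<in> J. multiplicity p (g i))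
      \<le> multiplicity p y + (\<Sum>i \<in> K. multiplicity p (g i))"
proof -
  define B where "B = multiplicity p x + multiplicity p y
    + (\<Sum>i \<in> J. multiplicity p (g i)) + (\<Sum>i \<in> K. multiplicity p (g i))"
  have "multiplicity p (g i) \<le> B" if "i \<in> J \<union> K" for i
    using that assms(2,3) member_le_sum[of i J "\<lambda>i. multiplicity p (g i)"]
      member_le_sum[of i K "\<lambda>i. multiplicity p (g i)"]
    unfolding B_def by auto
  then have J_layers: "(\<Sum>i \<in> J. multiplicity p (g i)) = (\<Sum>t = 1..B. card {i \<in> J. p ^ t dvd g i})"
    and K_layers: "(\<Sum>i \<in> K. multiplicity p (g i)) = (\<Sum>t = 1..B. card {i \<in> K. p ^ t dvd g i})"
    using assms by (intro sum_multiplicity_eq_sum_card_power_dvd; simp)+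
  have x_layers: "multiplicity p x = (\<Sum>t = 1..B. of_bool (p ^ t dvd x))"
    and y_layers: "multiplicity p y = (\<Sum>t = 1..B. of_bool (p ^ t dvd y))"
    using assms unfolding B_def by (intro multiplicity_eq_sum_power_dvd; simp)+
  have "multiplicity p x + (\<Sum>i \<in> J. multiplicity p (g i))
      = (\<Sum>t = 1..B. of_bool (p ^ t dvd x) + card {i \<in> J. p ^ t dvd g i})"
    by (simp only: x_layers J_layers sum.distrib)
  also have "\<dots> \<le> (\<Sum>t = 1..B. of_bool (p ^ t dvd y) + card {i \<in> K. p ^ t dvd g i})"
    by (rule sum_mono) (rule layer_le)
  also have "\<dots> = multiplicity p y + (\<Sum>i \<in> K. multiplicity p (g i))"
    by (simp only: y_layers K_layers sum.distrib)
  finally show ?thesis .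
qed

lemma multiplicity_window_quotient:
  fixes f :: "nat \<Rightarrow> 'a :: factorial_semiring" and p A :: 'a
  assumes nonzero: "\<And>i. 1 \<le> i \<Longrightarrow> f i \<noteq> 0"
    and "1 \<le> m" and "prime p"
    and A: "A * (\<Prod>i = 1..m. f i) = f m * (\<Prod>i = a+1..a+m. f i)"
  shows "multiplicity p A + (\<Sum>i = 1..m. multiplicity p (f i))
      = multiplicity p (f m) + (\<Sum>i = a+1..a+m. multiplicity p (f i))"
proof -
  have "prime_elem p"
    using \<open>prime p\<close> by simp
  have "f m \<noteq> 0" "(\<Prod>i = 1..m. f i) \<noteq> 0" "(\<Prod>i = a+1..a+m. f i) \<noteq> 0"
    using nonzero \<open>1 \<le> m\<close> by simp_all
  moreover from this have "A \<noteq> 0"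
    using A by auto
  moreover have "multiplicity p (\<Prod>i = 1..m. f i) = (\<Sum>i = 1..m. multiplicity p (f i))"
    "multiplicity p (\<Prod>i = a+1..a+m. f i) = (\<Sum>i = a+1..a+m. multiplicity p (f i))"
    using nonzero by (intro prime_elem_multiplicity_prod_distrib \<open>prime_elem p\<close>; force)+
  ultimately show ?thesis
    using arg_cong[OF A, of "multiplicity p"]
    by (simp add: prime_elem_multiplicity_mult_distrib \<open>prime_elem p\<close>)
qed

lemma ex_window_multiplicity_ge:
  fixes f :: "nat \<Rightarrow> 'a :: factorial_semiring" and p A :: 'a
  assumes nonzero: "\<And>i. 1 \<le> i \<Longrightarrow> f i \<noteq> 0"
    and multiples: "\<And>q. \<exists>d. \<forall>i. q dvd f i \<longleftrightarrow> d dvd i"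
    and "1 \<le> m" and "prime p"
    and A: "A * (\<Prod>i = 1..m. f i) = f m * (\<Prod>i = a+1..a+m. f i)"
  shows "\<exists>i \<in> {a+1..a+m}. multiplicity p A \<le> multiplicity p (f i)"
proof -
  define W where "W = {a+1..a+m}"
  define v where "v i = multiplicity p (f i)" for i
  have "finite W" "W \<noteq> {}" and W_pos: "\<And>i. i \<in> W \<Longrightarrow> 1 \<le> i"
    using \<open>1 \<le> m\<close> unfolding W_def by auto
  then have "Max (v ` W) \<in> v ` W" by simp
  then obtain i0 where i0_Max: "Max (v ` W) = v i0" and "i0 \<in> W" by (rule imageE)
  have i0_max: "p ^ t dvd f i0" if "i \<in> W" "p ^ t dvd f i" for i t
  proof -
    have "t \<le> v i"
      using that nonzero W_pos \<open>prime p\<close> unfolding v_def by (auto simp: multiplicity_geI not_prime_unit)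
    also have "v i \<le> v i0"
      unfolding i0_Max[symmetric] using \<open>finite W\<close> that(1) by simp
    finally show ?thesis unfolding v_def by (rule multiplicity_dvd')
  qed
  have "of_bool (p ^ t dvd f m) + card {i \<in> W. p ^ t dvd f i}
      \<le> of_bool (p ^ t dvd f i0) + card {i \<in> {1..m}. p ^ t dvd f i}" for t
  proof -
    obtain d where d: "\<And>i. p ^ t dvd f i \<longleftrightarrow> d dvd i" using multiples by blast
    have "of_bool (\<exists>i \<in> W. d dvd i) \<le> (of_bool (d dvd i0) :: nat)"
      using i0_max[of _ t] by (auto simp: d)
    then show ?thesis
      using card_multiples_window_le[OF \<open>1 \<le> m\<close>, of d a] unfolding W_def d by linarith
  qed
  then have "v m + (\<Sum>i \<in> W. v i) \<le> v i0 + (\<Sum>i = 1..m. v i)"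
    unfolding v_def using \<open>finite W\<close> \<open>1 \<le> m\<close> \<open>i0 \<in> W\<close> W_pos nonzero
    by (intro multiplicity_add_sum_le_by_layers \<open>prime p\<close>) auto
  then show ?thesis
    using multiplicity_window_quotient[OF nonzero \<open>1 \<le> m\<close> \<open>prime p\<close> A] \<open>i0 \<in> W\<close>
    unfolding W_def v_def by force
qed

lemma dvd_Lcm_window:
  fixes f :: "nat \<Rightarrow> 'a :: factorial_semiring_gcd" and A :: 'a
  assumes nonzero: "\<And>i. 1 \<le> i \<Longrightarrow> f i \<noteq> 0"
    and multiples: "\<And>q. \<exists>d. \<forall>i. q dvd f i \<longleftrightarrow> d dvd i"
    and "1 \<le> m"
    and A: "A * (\<Prod>i = 1..m. f i) = f m * (\<Prod>i = a+1..a+m. f i)"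
  shows "A dvd Lcm (f ` {a+1..a+m})"
proof (rule multiplicity_le_imp_dvd)
  show "A \<noteq> 0"
    using A nonzero \<open>1 \<le> m\<close> by auto
  have "Lcm (f ` {a+1..a+m}) \<noteq> 0"
    using nonzero by (auto simp: Lcm_0_iff)
  fix p :: 'a
  assume "prime p"
  then obtain i where "i \<in> {a+1..a+m}" "multiplicity p A \<le> multiplicity p (f i)"
    using ex_window_multiplicity_ge[OF nonzero multiples \<open>1 \<le> m\<close> _ A] by blast
  moreover from this have "multiplicity p (f i) \<le> multiplicity p (Lcm (f ` {a+1..a+m}))"
    using \<open>Lcm _ \<noteq> 0\<close> by (intro dvd_imp_multiplicity_le dvd_Lcm) auto
  ultimately show "multiplicity p A \<le> multiplicity p (Lcm (f ` {a+1..a+m}))"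
    by linarith
qed

lemma lucasU_add:
  "lucasU P Q (Suc (m + n)) = lucasU P Q (Suc m) * lucasU P Q (Suc n) - Q * lucasU P Q m * lucasU P Q n"
proof (induction m rule: induct_nat_012)
  case (ge2 m)
  let ?U = "lucasU P Q"
  have "?U (Suc (Suc (Suc m) + n)) = P * ?U (Suc (Suc m + n)) - Q * ?U (Suc (m + n))"
    by (simp only: add_Suc lucasU.simps(3))
  also have "\<dots> = P * (?U (Suc (Suc m)) * ?U (Suc n) - Q * ?U (Suc m) * ?U n)
      - Q * (?U (Suc m) * ?U (Suc n) - Q * ?U m * ?U n)"
    by (simp only: ge2)
  also have "\<dots> = (P * ?U (Suc (Suc m)) - Q * ?U (Suc m)) * ?U (Suc n)
      - Q * (P * ?U (Suc m) - Q * ?U m) * ?U n"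
    by (simp only: algebra_simps)
  also have "\<dots> = ?U (Suc (Suc (Suc m))) * ?U (Suc n) - Q * ?U (Suc (Suc m)) * ?U n"
    by simp
  finally show ?case .
qed simp_all

lemma coprime_add_mult_left_iff:
  fixes a k c :: "'a :: semiring_gcd"
  shows "coprime (a + k * c) c \<longleftrightarrow> coprime a c"
  by (simp add: coprime_iff_gcd_eq_1 gcd.commute[of _ c] add.commute[of a] gcd_add_mult)

lemma coprime_lucasU_Q:
  assumes "coprime P Q"
  shows "coprime (lucasU P Q (Suc n)) Q"
proof (induction n rule: induct_nat_012)
  case (ge2 n)
  have "lucasU P Q (Suc (Suc (Suc n))) = P * lucasU P Q (Suc (Suc n)) + (- lucasU P Q (Suc n)) * Q"
    by simp
  then show ?case
    using ge2 assms by (simp only: coprime_add_mult_left_iff coprime_mult_left_iff)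
qed (use assms in simp_all)

lemma coprime_lucasU_Suc:
  assumes "coprime P Q"
  shows "coprime (lucasU P Q (Suc n)) (lucasU P Q n)"
proof (induction n)
  case (Suc n)
  have "lucasU P Q (Suc (Suc n)) = - (Q * lucasU P Q n) + P * lucasU P Q (Suc n)"
    by simp
  moreover have "coprime (- (Q * lucasU P Q n)) (lucasU P Q (Suc n))"
    using Suc coprime_lucasU_Q[OF assms, of n] by (simp add: coprime_commute)
  ultimately show ?case
    by (simp only: coprime_add_mult_left_iff)
qed simp

lemma lucasU_dvd_add:
  assumes "x dvd lucasU P Q a" "x dvd lucasU P Q b"
  shows "x dvd lucasU P Q (a + b)"
proof (cases b)
  case (Suc c)
  then have "lucasU P Q (a + b) = lucasU P Q (Suc a) * lucasU P Q b - Q * lucasU P Q a * lucasU P Q c"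
    using lucasU_add[of P Q a c] by simp
  then show ?thesis
    using assms by simp
qed (use assms in simp)

lemma lucasU_dvd_diff:
  assumes "coprime P Q" "x dvd lucasU P Q b" "x dvd lucasU P Q (a + b)"
  shows "x dvd lucasU P Q a"
proof (cases b)
  case (Suc c)
  then have "Q * lucasU P Q c * lucasU P Q a = lucasU P Q (Suc a) * lucasU P Q b - lucasU P Q (a + b)"
    using lucasU_add[of P Q a c] by (simp add: algebra_simps)
  then have "x dvd Q * lucasU P Q c * lucasU P Q a"
    using assms(2,3) by simp
  moreover have "coprime (lucasU P Q b) (Q * lucasU P Q c)"
    using coprime_lucasU_Q[OF assms(1), of c] coprime_lucasU_Suc[OF assms(1), of c] Suc
    by simp
  then have "coprime x (Q * lucasU P Q c)"
    by (rule coprime_divisors[OF assms(2) dvd_refl])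
  ultimately show ?thesis
    by (simp add: coprime_dvd_mult_right_iff)
qed (use assms in simp)

lemma lucasU_dvd_iff_dvd_index:
  assumes "coprime P Q"
  shows "\<exists>d. \<forall>i. x dvd lucasU P Q i \<longleftrightarrow> d dvd i"
proof -
  have "\<exists>d. {i. x dvd lucasU P Q i} = {i. d dvd i}"
  proof (rule nat_set_eq_multiples)
    show "a + b \<in> {i. x dvd lucasU P Q i}"
      if "a \<in> {i. x dvd lucasU P Q i}" "b \<in> {i. x dvd lucasU P Q i}" for a b
      using that by (blast intro: lucasU_dvd_add)
    show "a \<in> {i. x dvd lucasU P Q i}"
      if "a + b \<in> {i. x dvd lucasU P Q i}" "b \<in> {i. x dvd lucasU P Q i}" for a b
      using that by (blast intro: lucasU_dvd_diff[OF assms])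
  qed simp
  then show ?thesis
    by (simp add: set_eq_iff)
qed

lemma lucas_alpha_beta:
  "lucas_alpha P Q + lucas_beta P Q = of_int P"
  "lucas_alpha P Q * lucas_beta P Q = of_int Q"
proof -
  define s where "s = csqrt (of_int (P^2 - 4 * Q))"
  have "s^2 = of_int P ^ 2 - 4 * of_int Q"
    unfolding s_def by simp
  then have "(of_int P + s) * (of_int P - s) = 4 * (of_int Q :: complex)"
    by (simp add: algebra_simps power2_eq_square)
  then show "lucas_alpha P Q * lucas_beta P Q = of_int Q"
    unfolding lucas_alpha_def lucas_beta_def s_def[symmetric] by simp
  show "lucas_alpha P Q + lucas_beta P Q = of_int P"
    unfolding lucas_alpha_def lucas_beta_def by (simp add: add_divide_distrib[symmetric])
qed

lemma lucasU_binet: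
  "of_int (lucasU P Q n) * (lucas_alpha P Q - lucas_beta P Q) = lucas_alpha P Q ^ n - lucas_beta P Q ^ n"
proof (induction n rule: induct_nat_012)
  case (ge2 n)
  let ?a = "lucas_alpha P Q" and ?b = "lucas_beta P Q"
  have "of_int (lucasU P Q (Suc (Suc n))) * (?a - ?b)
      = (?a + ?b) * (of_int (lucasU P Q (Suc n)) * (?a - ?b)) - ?a * ?b * (of_int (lucasU P Q n) * (?a - ?b))"
    by (simp add: lucas_alpha_beta algebra_simps)
  also have "\<dots> = ?a ^ Suc (Suc n) - ?b ^ Suc (Suc n)"
    unfolding ge2 by (simp add: algebra_simps)
  finally show ?case .
qed simp_all

lemma lucasU_nonzero:
  assumes "Q \<noteq> 0" "\<not> root_of_unity (lucas_alpha P Q / lucas_beta P Q)" "n \<noteq> 0"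
  shows "lucasU P Q n \<noteq> 0"
proof
  assume "lucasU P Q n = 0"
  then have "lucas_alpha P Q ^ n = lucas_beta P Q ^ n"
    using lucasU_binet[of P Q n] by simp
  moreover have "lucas_beta P Q \<noteq> 0"
    using lucas_alpha_beta(2)[of P Q] assms(1) by auto
  ultimately have "(lucas_alpha P Q / lucas_beta P Q) ^ n = 1"
    by (simp add: power_divide)
  then show False
    using assms(2,3) unfolding root_of_unity_def by blast
qed

lemma lucas_fact_0 [simp]: "lucas_fact P Q 0 = 1"
  by (simp add: lucas_fact_def)

lemma lucas_fact_Suc: "lucas_fact P Q (Suc j) = lucas_fact P Q j * lucasU P Q (Suc j)"
  by (simp add: lucas_fact_def)

lemma lucas_fact_add: "lucas_fact P Q (a + m) = lucas_fact P Q a * (\<Prod>i = a+1..a+m. lucasU P Q i)"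
  unfolding lucas_fact_def by (rule prod.ub_add_nat) simp

lemma lucas_fact_mult_dvd: "lucas_fact P Q a * lucas_fact P Q b dvd lucas_fact P Q (a + b)"
proof (induction "a + b" arbitrary: a b rule: less_induct)
  case less
  let ?F = "lucas_fact P Q" and ?U = "lucasU P Q"
  consider "a = 0" | "b = 0" | a' b' where "a = Suc a'" "b = Suc b'"
    by (meson not0_implies_Suc)
  then show ?case
  proof cases
    case 3
    have IH: "?F (Suc a') * ?F b' dvd ?F (Suc (a' + b'))" "?F a' * ?F (Suc b') dvd ?F (Suc (a' + b'))"
      using less[of "Suc a'" b'] less[of a' "Suc b'"] 3 by simp_all
    have "?F a * ?F b = ?F (Suc a') * ?F b' * ?U b"
      unfolding 3 lucas_fact_Suc by (simp only: ac_simps)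
    then have dvd_b: "?F a * ?F b dvd ?F (Suc (a' + b')) * ?U b"
      using mult_dvd_mono[OF IH(1) dvd_refl] by simp
    have "?F a * ?F b = ?F a' * ?F (Suc b') * ?U a"
      unfolding 3 lucas_fact_Suc by (simp only: ac_simps)
    then have dvd_a: "?F a * ?F b dvd ?F (Suc (a' + b')) * ?U a"
      using mult_dvd_mono[OF IH(2) dvd_refl] by simp
    have "?F a * ?F b
        dvd ?U (Suc a) * (?F (Suc (a' + b')) * ?U b) - Q * ?U b' * (?F (Suc (a' + b')) * ?U a)"
      using dvd_mult[OF dvd_b] dvd_mult[OF dvd_a] by (rule dvd_diff)
    also have "\<dots> = ?F (Suc (a' + b')) * (?U (Suc a) * ?U b - Q * ?U a * ?U b')"
      by (simp only: algebra_simps)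
    also have "\<dots> = ?F (a + b)"
      using lucasU_add[of P Q "Suc a'" b'] 3 by (simp add: lucas_fact_Suc)
    finally show ?thesis .
  qed simp_all
qed

lemma lucas_binom_mult_fact:
  assumes "m \<le> n" "lucas_fact P Q (n - m) \<noteq> 0"
  shows "lucas_binom P Q n m * lucas_fact P Q m = (\<Prod>i = n-m+1..n. lucasU P Q i)"
proof -
  have window: "lucas_fact P Q n = lucas_fact P Q (n - m) * (\<Prod>i = n-m+1..n. lucasU P Q i)"
    using lucas_fact_add[of P Q "n - m" m] assms(1) by simp
  have "lucas_fact P Q (n - m) * lucas_fact P Q m dvd lucas_fact P Q n"
    using lucas_fact_mult_dvd[of P Q "n - m" m] assms(1) by simp
  then have "lucas_fact P Q m dvd (\<Prod>i = n-m+1..n. lucasU P Q i)"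
    unfolding window using assms(2) by simp
  then show ?thesis
    unfolding lucas_binom_def by simp
qed

lemma lucasU_mult_lucas_binom:
  assumes "1 \<le> m" "m \<le> n" "lucas_fact P Q n \<noteq> 0"
  shows "lucasU P Q m * lucas_binom P Q n m = lucasU P Q (n - m + 1) * lucas_binom P Q n (m - 1)"
proof -
  have fact_nonzero: "lucas_fact P Q j \<noteq> 0" if "j \<le> n" for j
    using lucas_fact_mult_dvd[of P Q j "n - j"] assms(3) that by auto
  have "lucasU P Q m * lucas_binom P Q n m * lucas_fact P Q (m - 1)
      = lucas_binom P Q n m * lucas_fact P Q m"
    using lucas_fact_Suc[of P Q "m - 1"] assms(1) by simp
  also have "\<dots> = (\<Prod>i = n-m+1..n. lucasU P Q i)"
    using lucas_binom_mult_fact fact_nonzero assms(2) by simp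
  also have "\<dots> = lucasU P Q (n - m + 1) * (\<Prod>i = n-(m-1)+1..n. lucasU P Q i)"
    using assms(1,2) by (simp add: prod.atLeast_Suc_atMost Suc_diff_le)
  also have "\<dots> = lucasU P Q (n - m + 1) * lucas_binom P Q n (m - 1) * lucas_fact P Q (m - 1)"
    using lucas_binom_mult_fact fact_nonzero assms(2) by simp
  finally show ?thesis
    using fact_nonzero[of "m - 1"] assms(2) by simp
qed

lemma lucasU_mult_lucas_binom_dvd_Lcm:
  assumes "coprime P Q" "\<And>i. 1 \<le> i \<Longrightarrow> lucasU P Q i \<noteq> 0" "1 \<le> m" "m \<le> n"
  shows "lucasU P Q m * lucas_binom P Q n m dvd Lcm (lucasU P Q ` {n-m+1..n})"
proof -
  have "lucas_fact P Q (n - m) \<noteq> 0"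
    using assms(2) unfolding lucas_fact_def by simp
  then have "lucasU P Q m * lucas_binom P Q n m * (\<Prod>i = 1..m. lucasU P Q i)
      = lucasU P Q m * (\<Prod>i = (n-m)+1..(n-m)+m. lucasU P Q i)"
    using lucas_binom_mult_fact[OF \<open>m \<le> n\<close>] \<open>m \<le> n\<close> unfolding lucas_fact_def
    by (simp add: mult.assoc)
  then have "lucasU P Q m * lucas_binom P Q n m dvd Lcm (lucasU P Q ` {(n-m)+1..(n-m)+m})"
    by (intro dvd_Lcm_window[OF assms(2) lucasU_dvd_iff_dvd_index[OF assms(1)] \<open>1 \<le> m\<close>])
  then show ?thesis
    using \<open>m \<le> n\<close> by simp
qed

theorem theorem7:
  fixes P Q :: int and n k :: nat
  assumes "P \<noteq> 0" and "Q \<noteq> 0" and "coprime P Q"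
    and "P^2 - 4*Q \<noteq> 0"
    and "\<not> root_of_unity (lucas_alpha P Q / lucas_beta P Q)"
    and "1 \<le> k" and "k \<le> n"
  shows "Lcm ((\<lambda>i. lucasU P Q i) ` {n-k+1..n})
       = Lcm ((\<lambda>m. lucasU P Q m * lucas_binom P Q n m) ` {1..k})"
proof -
  let ?U = "lucasU P Q"
  let ?X = "?U ` {n-k+1..n}" and ?Y = "(\<lambda>m. ?U m * lucas_binom P Q n m) ` {1..k}"
  have U_nonzero: "?U i \<noteq> 0" if "1 \<le> i" for i
    using lucasU_nonzero assms(2,5) that by simp
  have "Lcm ?X dvd Lcm ?Y"
  proof (rule Lcm_least)
    fix x assume "x \<in> ?X"
    then obtain i where i: "i \<in> {n-k+1..n}" "x = ?U i" by blast
    define m where "m = n + 1 - i"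
    have "1 \<le> m" "m \<le> k" "i = n - m + 1"
      using i(1) assms(7) unfolding m_def by auto
    moreover have "lucas_fact P Q n \<noteq> 0"
      using U_nonzero unfolding lucas_fact_def by simp
    ultimately have "x dvd ?U m * lucas_binom P Q n m"
      using lucasU_mult_lucas_binom[of m n P Q] i(2) assms(7) by simp
    also have "\<dots> dvd Lcm ?Y"
      using \<open>1 \<le> m\<close> \<open>m \<le> k\<close> by (intro dvd_Lcm) auto
    finally show "x dvd Lcm ?Y" .
  qed
  moreover have "Lcm ?Y dvd Lcm ?X"
  proof (rule Lcm_least)
    fix y assume "y \<in> ?Y"
    then obtain m where m: "m \<in> {1..k}" "y = ?U m * lucas_binom P Q n m" by blast
    then have "y dvd Lcm (?U ` {n-m+1..n})"
      using lucasU_mult_lucas_binom_dvd_Lcm[OF assms(3) U_nonzero] assms(7) by simp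
    also have "\<dots> dvd Lcm ?X"
      using m(1) by (intro Lcm_subset image_mono) auto
    finally show "y dvd Lcm ?X" .
  qed
  ultimately show ?thesis
    by (rule associated_eqI) simp_all
qed

end
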